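(* Let $x_1,\dots,x_n\in\mathbb{R}^2$ satisfy $x_i\prec x_j$ whenever $i<j$, and let $p\ge 2$. For $k\in\{2,\dots,p\}$ and $i\in\{k,\dots,n\}$, let $C^{MSN}_{k,i}$ be the optimal value of the Max-Sum-Neighbor $k$-dispersion problem among the points $x_1,\dots,x_i$, i.e. $C^{MSN}_{k,i}=\max_{1\le i_1<\dots<i_k\le i}\sum_{j=1}^{k-1}d_{i_j,i_{j+1}}$. Then $C^{MSN}_{2,i}=d_{1,i}$ for all $i\in\{2,\dots,n\}$, and for all $k\in\{3,\dots,p\}$ and $i\in\{k,\dots,n\}$, $$C^{MSN}_{k,i}=\max_{j\in\{k-1,\dots,i-1\}}\left(C^{MSN}_{k-1,j}+d_{j,i}\right).$$
   Context: For $y=(y^1,y^2),z=(z^1,z^2)\in\mathbb{R}^2$ write $y\prec z$ iff $y^1<z^1$ and $y^2>z^2$. Fix $\alpha>0$, let $d$ be the Euclidean distance, and set $d_{ij}=d(x_i,x_j)^\alpha$. *)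

theory Defs
  imports "HOL-Analysis.Analysis"
begin

text \<open>Points of R^2 are modelled as real \<times> real; dist on the product is Euclidean.\<close>

definition prec :: "real \<times> real \<Rightarrow> real \<times> real \<Rightarrow> bool" where
  "prec y z \<longleftrightarrow> fst y < fst z \<and> snd y > snd z"

definition dd :: "real \<Rightarrow> (nat \<Rightarrow> real \<times> real) \<Rightarrow> nat \<Rightarrow> nat \<Rightarrow> real" where
  "dd \<alpha> x i j = dist (x i) (x j) powr \<alpha>"

definition msn :: "real \<Rightarrow> (nat \<Rightarrow> real \<times> real) \<Rightarrow> nat \<Rightarrow> nat \<Rightarrow> real" where
  "msn \<alpha> x k i = Max {(\<Sum>j=1..k-1. dd \<alpha> x (s j) (s (j+1))) | s :: nat \<Rightarrow> nat.
      (\<forall>j\<in>{1..k}. 1 \<le> s j \<and> s j \<le> i) \<and> (\<forall>j. 1 \<le> j \<and> j < k \<longrightarrow> s j < s (j+1))}"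

end

theory Submission
  imports Defs
begin

text \<open>Along a \<open>\<prec>\<close>-chain both coordinates are monotone, so an index pair nested inside another
  one spans a shorter distance. Hence the last index of an optimal \<open>k\<close>-tuple among
  \<open>x\<^sub>1, \<dots>, x\<^sub>i\<close> may be taken to be \<open>i\<close>, and its second-to-last index \<open>j\<close> ends an
  optimal \<open>(k-1)\<close>-tuple among \<open>x\<^sub>1, \<dots>, x\<^sub>j\<close>; for \<open>k = 2\<close> the optimal pair is \<open>(1, i)\<close>.\<close>

definition increasing_indices :: "nat \<Rightarrow> nat \<Rightarrow> (nat \<Rightarrow> nat) \<Rightarrow> bool" where
  "increasing_indices k i s \<longleftrightarrow>
     (\<forall>j\<in>{1..k}. 1 \<le> s j \<and> s j \<le> i) \<and> (\<forall>j. 1 \<le> j \<and> j < k \<longrightarrow> s j < s (j+1))"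

definition neighbor_sum :: "real \<Rightarrow> (nat \<Rightarrow> real \<times> real) \<Rightarrow> nat \<Rightarrow> (nat \<Rightarrow> nat) \<Rightarrow> real" where
  "neighbor_sum \<alpha> x k s = (\<Sum>j=1..k-1. dd \<alpha> x (s j) (s (j+1)))"

lemma msn_eq_Max_neighbor_sums:
  "msn \<alpha> x k i = Max {neighbor_sum \<alpha> x k s | s. increasing_indices k i s}"
  by (simp add: msn_def increasing_indices_def neighbor_sum_def)

lemma increasing_indices_id: "k \<le> i \<Longrightarrow> increasing_indices k i (\<lambda>j. j)"
  unfolding increasing_indices_def by auto

lemma increasing_indices_cong:
  "(\<And>j. j \<in> {1..k} \<Longrightarrow> s j = t j) \<Longrightarrow> increasing_indices k i s \<longleftrightarrow> increasing_indices k i t"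
  unfolding increasing_indices_def by auto

lemma increasing_indices_mono:
  assumes "increasing_indices k i s" "1 \<le> m" "m \<le> m'" "m' \<le> k"
  shows "s m \<le> s m'"
  using assms(3,4)
proof (induction m' rule: dec_induct)
  case (step m')
  then have "s m' < s (Suc m')"
    using assms(1,2) unfolding increasing_indices_def by auto
  with step show ?case by simp
qed simp

lemma increasing_indices_ge_index:
  assumes "increasing_indices k i s" "1 \<le> j" "j \<le> k"
  shows "j \<le> s j"
  using assms(2,3)
proof (induction j rule: dec_induct)
  case base
  then show ?case
    using assms(1) unfolding increasing_indices_def by auto
next
  case (step j)
  then have "s j < s (Suc j)"
    using assms(1) unfolding increasing_indices_def by auto
  with step show ?case by simp
qed

lemma increasing_indices_Suc_iff:
  assumes "1 \<le> k"
  shows "increasing_indices (Suc k) i s \<longleftrightarrow>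
           increasing_indices k (s k) s \<and> s k < s (Suc k) \<and> s (Suc k) \<le> i"
proof
  assume s: "increasing_indices (Suc k) i s"
  then have "s m \<le> s k" if "m \<in> {1..k}" for m
    using increasing_indices_mono[OF s] that by auto
  with s assms show "increasing_indices k (s k) s \<and> s k < s (Suc k) \<and> s (Suc k) \<le> i"
    unfolding increasing_indices_def by auto
next
  assume "increasing_indices k (s k) s \<and> s k < s (Suc k) \<and> s (Suc k) \<le> i"
  then have prefix: "increasing_indices k (s k) s" and last: "s k < s (Suc k)" "s (Suc k) \<le> i"
    by auto
  have "1 \<le> s k"
    using prefix assms unfolding increasing_indices_def by auto
  show "increasing_indices (Suc k) i s"
    unfolding increasing_indices_def
  proof (intro conjI ballI allI impI)
    fix m assume "m \<in> {1..Suc k}"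
    then consider "m = Suc k" | "m \<in> {1..k}" by fastforce
    then have "1 \<le> s m \<and> s m \<le> i"
    proof cases
      case 2
      with prefix last show ?thesis unfolding increasing_indices_def by fastforce
    qed (use \<open>1 \<le> s k\<close> last in auto)
    then show "1 \<le> s m" "s m \<le> i" by auto
  next
    fix m assume "1 \<le> m \<and> m < Suc k"
    with prefix last show "s m < s (m + 1)"
      unfolding increasing_indices_def by (cases "m = k") auto
  qed
qed

lemma neighbor_sum_cong:
  "(\<And>j. j \<in> {1..k} \<Longrightarrow> s j = t j) \<Longrightarrow> neighbor_sum \<alpha> x k s = neighbor_sum \<alpha> x k t"
  unfolding neighbor_sum_def by (intro sum.cong) auto

lemma neighbor_sum_Suc:
  "1 \<le> k \<Longrightarrow> neighbor_sum \<alpha> x (Suc k) s = neighbor_sum \<alpha> x k s + dd \<alpha> x (s k) (s (Suc k))"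
  unfolding neighbor_sum_def by (cases k) (auto simp: sum.cl_ivl_Suc)

lemma finite_neighbor_sums: "finite {neighbor_sum \<alpha> x k s | s. increasing_indices k i s}"
proof (rule finite_subset)
  show "{neighbor_sum \<alpha> x k s | s. increasing_indices k i s}
          \<subseteq> neighbor_sum \<alpha> x k ` ({1..k} \<rightarrow>\<^sub>E {0..i})"
  proof safe
    fix s assume "increasing_indices k i s"
    then have "restrict s {1..k} \<in> {1..k} \<rightarrow>\<^sub>E {0..i}"
      unfolding increasing_indices_def by auto
    moreover have "neighbor_sum \<alpha> x k s = neighbor_sum \<alpha> x k (restrict s {1..k})"
      by (rule neighbor_sum_cong) simp
    ultimately show "neighbor_sum \<alpha> x k s \<in> neighbor_sum \<alpha> x k ` ({1..k} \<rightarrow>\<^sub>E {0..i})"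
      by blast
  qed
qed (intro finite_imageI finite_PiE; simp)

lemma neighbor_sum_le_msn: "increasing_indices k i s \<Longrightarrow> neighbor_sum \<alpha> x k s \<le> msn \<alpha> x k i"
  unfolding msn_eq_Max_neighbor_sums by (rule Max_ge[OF finite_neighbor_sums]) blast

lemma msn_leI:
  assumes "k \<le> i" "\<And>s. increasing_indices k i s \<Longrightarrow> neighbor_sum \<alpha> x k s \<le> v"
  shows "msn \<alpha> x k i \<le> v"
  unfolding msn_eq_Max_neighbor_sums
  using assms increasing_indices_id[OF assms(1)] by (subst Max_le_iff[OF finite_neighbor_sums]) auto

lemma msn_attained:
  assumes "k \<le> i"
  obtains s where "increasing_indices k i s" "msn \<alpha> x k i = neighbor_sum \<alpha> x k s"
proof -
  have "{neighbor_sum \<alpha> x k s | s. increasing_indices k i s} \<noteq> {}"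
    using increasing_indices_id[OF assms] by blast
  from Max_in[OF finite_neighbor_sums this] that show ?thesis
    unfolding msn_eq_Max_neighbor_sums by blast
qed

lemma dist_prod_le_componentwise:
  fixes p q p' q' :: "'a::metric_space \<times> 'b::metric_space"
  assumes "dist (fst p) (fst q) \<le> dist (fst p') (fst q')"
    and "dist (snd p) (snd q) \<le> dist (snd p') (snd q')"
  shows "dist p q \<le> dist p' q'"
  unfolding dist_prod_def
  by (intro real_sqrt_le_mono add_mono power_mono assms) auto

locale prec_chain =
  fixes x :: "nat \<Rightarrow> real \<times> real" and n :: nat
  assumes prec_chain: "\<And>i j. 1 \<le> i \<Longrightarrow> i < j \<Longrightarrow> j \<le> n \<Longrightarrow> prec (x i) (x j)"
begin

lemma coordinates_mono:
  assumes "1 \<le> i" "i \<le> j" "j \<le> n"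
  shows "fst (x i) \<le> fst (x j) \<and> snd (x j) \<le> snd (x i)"
proof (cases "i = j")
  case False
  with assms have "prec (x i) (x j)" by (intro prec_chain) auto
  then show ?thesis by (simp add: prec_def)
qed simp

lemma dd_mono:
  assumes "0 \<le> \<alpha>" "1 \<le> a'" "a' \<le> a" "a \<le> b" "b \<le> b'" "b' \<le> n"
  shows "dd \<alpha> x a b \<le> dd \<alpha> x a' b'"
proof -
  have "dist (x a) (x b) \<le> dist (x a') (x b')"
    using coordinates_mono[of a' a] coordinates_mono[of a b] coordinates_mono[of b b'] assms(2-6)
    by (intro dist_prod_le_componentwise) (auto simp: dist_real_def)
  then show ?thesis
    unfolding dd_def using assms(1) by (intro powr_mono2) auto
qed

lemma msn_two:
  assumes "0 \<le> \<alpha>" "2 \<le> i" "i \<le> n"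
  shows "msn \<alpha> x 2 i = dd \<alpha> x 1 i"
proof (rule antisym)
  have two: "neighbor_sum \<alpha> x 2 s = dd \<alpha> x (s 1) (s 2)" for s
    by (simp add: neighbor_sum_def numeral_2_eq_2)
  show "msn \<alpha> x 2 i \<le> dd \<alpha> x 1 i"
  proof (rule msn_leI[OF assms(2)])
    fix s assume s: "increasing_indices 2 i s"
    then have "1 \<le> s 1" "s 1 \<le> s 2" "s 2 \<le> i"
      using increasing_indices_mono[OF s, of 1 2] unfolding increasing_indices_def by auto
    then show "neighbor_sum \<alpha> x 2 s \<le> dd \<alpha> x 1 i"
      unfolding two using dd_mono[OF assms(1)] assms(3) by simp
  qed
  have "increasing_indices 2 i (\<lambda>j. if j = 1 then 1 else i)"
    using assms(2) unfolding increasing_indices_def by auto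
  from neighbor_sum_le_msn[OF this, of \<alpha> x] show "dd \<alpha> x 1 i \<le> msn \<alpha> x 2 i"
    unfolding two by simp
qed

lemma msn_Suc_le_Max:
  assumes "0 \<le> \<alpha>" "1 \<le> k" "Suc k \<le> i" "i \<le> n"
  shows "msn \<alpha> x (Suc k) i \<le> Max ((\<lambda>j. msn \<alpha> x k j + dd \<alpha> x j i) ` {k..i-1})"
proof (rule msn_leI[OF assms(3)])
  fix s assume "increasing_indices (Suc k) i s"
  then have prefix: "increasing_indices k (s k) s" and last: "s k < s (Suc k)" "s (Suc k) \<le> i"
    using increasing_indices_Suc_iff[OF assms(2)] by auto
  have "k \<le> s k"
    using increasing_indices_ge_index[OF prefix assms(2) order.refl] .
  with last have j: "s k \<in> {k..i-1}" by auto
  have "neighbor_sum \<alpha> x (Suc k) s = neighbor_sum \<alpha> x k s + dd \<alpha> x (s k) (s (Suc k))"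
    using neighbor_sum_Suc[OF assms(2)] .
  also have "\<dots> \<le> msn \<alpha> x k (s k) + dd \<alpha> x (s k) i"
    using neighbor_sum_le_msn[OF prefix] dd_mono[OF assms(1)] assms(2,4) last \<open>k \<le> s k\<close>
    by (intro add_mono) auto
  also have "\<dots> \<le> Max ((\<lambda>j. msn \<alpha> x k j + dd \<alpha> x j i) ` {k..i-1})"
    using j by (intro Max_ge) auto
  finally show "neighbor_sum \<alpha> x (Suc k) s \<le> Max ((\<lambda>j. msn \<alpha> x k j + dd \<alpha> x j i) ` {k..i-1})" .
qed

lemma msn_Suc_ge:
  assumes "0 \<le> \<alpha>" "1 \<le> k" "k \<le> j" "j < i" "i \<le> n"
  shows "msn \<alpha> x k j + dd \<alpha> x j i \<le> msn \<alpha> x (Suc k) i"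
proof -
  obtain t where t: "increasing_indices k j t" and opt: "msn \<alpha> x k j = neighbor_sum \<alpha> x k t"
    using msn_attained[OF assms(3)] .
  have "1 \<le> t k" "t k \<le> j"
    using t assms(2) unfolding increasing_indices_def by auto
  define s where "s = t(Suc k := i)"
  have agree: "s m = t m" if "m \<in> {1..k}" for m
    using that unfolding s_def by simp
  have "increasing_indices k (t k) t"
    using t increasing_indices_mono[OF t] assms(2) unfolding increasing_indices_def by auto
  then have "increasing_indices k (s k) s"
    using increasing_indices_cong[of k s t, OF agree] agree[of k] assms(2) by simp
  then have s: "increasing_indices (Suc k) i s"
    using increasing_indices_Suc_iff[OF assms(2)] \<open>t k \<le> j\<close> assms(4) by (simp add: s_def)
  have "msn \<alpha> x k j + dd \<alpha> x j i \<le> neighbor_sum \<alpha> x k t + dd \<alpha> x (t k) i"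
    unfolding opt using dd_mono[OF assms(1)] \<open>1 \<le> t k\<close> \<open>t k \<le> j\<close> assms(4,5) by simp
  also have "\<dots> = neighbor_sum \<alpha> x (Suc k) s"
    using neighbor_sum_Suc[OF assms(2)] neighbor_sum_cong[of k s t, OF agree] agree[of k] assms(2)
    by (simp add: s_def)
  also have "\<dots> \<le> msn \<alpha> x (Suc k) i"
    using neighbor_sum_le_msn[OF s] .
  finally show ?thesis .
qed

lemma msn_Suc:
  assumes "0 \<le> \<alpha>" "1 \<le> k" "Suc k \<le> i" "i \<le> n"
  shows "msn \<alpha> x (Suc k) i = Max ((\<lambda>j. msn \<alpha> x k j + dd \<alpha> x j i) ` {k..i-1})"
  using msn_Suc_le_Max[OF assms] msn_Suc_ge[OF assms(1,2)] assms(3,4)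
  by (intro antisym) (auto simp: Max_le_iff)

end

theorem proposition8:
  fixes x :: "nat \<Rightarrow> real \<times> real" and n p :: nat and \<alpha> :: real
  assumes "\<alpha> > 0"
    and "\<And>i j. 1 \<le> i \<Longrightarrow> i < j \<Longrightarrow> j \<le> n \<Longrightarrow> prec (x i) (x j)"
    and "p \<ge> 2"
  shows "(\<forall>i\<in>{2..n}. msn \<alpha> x 2 i = dd \<alpha> x 1 i) \<and>
         (\<forall>k\<in>{3..p}. \<forall>i\<in>{k..n}.
            msn \<alpha> x k i = Max ((\<lambda>j. msn \<alpha> x (k-1) j + dd \<alpha> x j i) ` {k-1..i-1}))"
proof (intro conjI ballI)
  interpret prec_chain x n
    using assms(2) by unfold_locales
  have "0 \<le> \<alpha>" using assms(1) by simp
  show "msn \<alpha> x 2 i = dd \<alpha> x 1 i" if "i \<in> {2..n}" for i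
    using msn_two[OF \<open>0 \<le> \<alpha>\<close>] that by simp
  fix k i assume "k \<in> {3..p}" "i \<in> {k..n}"
  then show "msn \<alpha> x k i = Max ((\<lambda>j. msn \<alpha> x (k-1) j + dd \<alpha> x j i) ` {k-1..i-1})"
    using msn_Suc[OF \<open>0 \<le> \<alpha>\<close>, of "k-1" i] by auto
qed

end
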